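(* Let $r_1,\dots,r_n$ be pairwise distinct integers and $v_1,\dots,v_n\in\mathbb{N}\cup\{\infty\}$ such that the support $S_{(r_1,\dots,r_n)}^{(v_1,\dots,v_n)}$ is a subgroup of $\mathbb{Z}$, and let $d=\gcd(r_1,\dots,r_n)$. If $S$ is a basis (generating set as a $T_{\mathbb{Z}}$-ideal) for $T_{\mathbb{Z}}(E_{(r_1/d,\dots,r_n/d)}^{(v_1,\dots,v_n)})$, then the $T_{\mathbb{Z}}$-ideal $T_{\mathbb{Z}}(E_{(r_1,\dots,r_n)}^{(v_1,\dots,v_n)})$ is generated by $S'\cup N$, where $S'=\{\Psi_d(\Phi_d(f)) : f\in S\}$ and $N=\{x_i^m\in X : m\notin d\mathbb{Z}\}$.
   Context: $F$ is a field of characteristic zero; $E$ is the Grassmann algebra of an infinite-dimensional $F$-vector space with basis $e_1,e_2,\dots$. For pairwise distinct integers $r_1,\dots,r_n$ and $v_j\in\mathbb{N}\cup\{\infty\}$, $E_{(r_1,\dots,r_n)}^{(v_1,\dots,v_n)}=\bigoplus_r A_r$ is the $\mathbb{Z}$-grading obtained by splitting $\{e_i\}$ into $n$ disjoint sets of cardinalities $v_1,\dots,v_n$, giving elements of the $j$-th set degree $r_j$ and monomials the sum of degrees; its support is $S_{(r_1,\dots,r_n)}^{(v_1,\dots,v_n)}=\{r: A_r\ne0\}$. For a group $G$, $F\langle X|G\rangle$ is the free associative algebra on variables $x_i^g$ ($i\ge1$, $g\in G$) of degree $g$; $X$ denotes the set of variables; $T_G(A)$ is the ideal of graded identities of a $G$-graded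 algebra $A$; a $T_G$-ideal is an ideal invariant under all degree-preserving endomorphisms. $\Phi_d:F\langle X|\mathbb{Z}\rangle\to F\langle X|d\mathbb{Z}\rangle$ is the algebra isomorphism $x_i^n\mapsto x_i^{dn}$, and $\Psi_d:F\langle X|d\mathbb{Z}\rangle\to F\langle X|\mathbb{Z}\rangle$ is the homomorphism $x_i^{dn}\mapsto x_i^{dn}$. *)

theory Defs
  imports Main "HOL-Library.Extended_Nat"
begin

text \<open>A variable x_i^g is the pair (i, g) with i :: nat and degree g :: int.
  A noncommutative polynomial is a finitely supported coefficient function on words
  (lists of variables).\<close>

type_synonym gvar = "nat \<times> int"
type_synonym 'a fpoly = "gvar list \<Rightarrow> 'a"

definition fa :: "('a::field) fpoly set" where
  "fa = {f. finite {w. f w \<noteq> 0}}"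

definition pone :: "('a::field) fpoly" where
  "pone = (\<lambda>w. if w = [] then 1 else 0)"

definition pvar :: "gvar \<Rightarrow> ('a::field) fpoly" where
  "pvar x = (\<lambda>w. if w = [x] then 1 else 0)"

definition padd :: "('a::field) fpoly \<Rightarrow> 'a fpoly \<Rightarrow> 'a fpoly" where
  "padd f g = (\<lambda>w. f w + g w)"

definition pmult :: "('a::field) fpoly \<Rightarrow> 'a fpoly \<Rightarrow> 'a fpoly" where
  "pmult f g = (\<lambda>w. \<Sum>k\<le>length w. f (take k w) * g (drop k w))"

definition wdeg :: "gvar list \<Rightarrow> int" where
  "wdeg w = sum_list (map snd w)"

definition homog :: "int \<Rightarrow> ('a::field) fpoly \<Rightarrow> bool" where
  "homog g f \<longleftrightarrow> (\<forall>w. f w \<noteq> 0 \<longrightarrow> wdeg w = g)"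

definition subst :: "(gvar \<Rightarrow> ('a::field) fpoly) \<Rightarrow> 'a fpoly \<Rightarrow> 'a fpoly" where
  "subst \<sigma> f = (\<lambda>u. \<Sum>w\<in>{w. f w \<noteq> 0}. f w * foldr pmult (map \<sigma> w) pone u)"

definition graded_endo :: "(gvar \<Rightarrow> ('a::field) fpoly) \<Rightarrow> bool" where
  "graded_endo \<sigma> \<longleftrightarrow> (\<forall>i g. \<sigma> (i, g) \<in> fa \<and> homog g (\<sigma> (i, g)))"

definition is_ideal :: "('a::field) fpoly set \<Rightarrow> bool" where
  "is_ideal I \<longleftrightarrow> I \<subseteq> fa \<and> (\<lambda>w. 0) \<in> I \<and> (\<forall>f\<in>I. \<forall>g\<in>I. padd f g \<in> I)
     \<and> (\<forall>f\<in>I. \<forall>h\<in>fa. pmult h f \<in> I \<and> pmult f h \<in> I)"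

definition TZ_ideal :: "('a::field) fpoly set \<Rightarrow> bool" where
  "TZ_ideal I \<longleftrightarrow> is_ideal I \<and> (\<forall>\<sigma>. graded_endo \<sigma> \<longrightarrow> (\<forall>f\<in>I. subst \<sigma> f \<in> I))"

definition Tgen :: "('a::field) fpoly set \<Rightarrow> 'a fpoly set" where
  "Tgen S = \<Inter> {I. TZ_ideal I \<and> S \<subseteq> I}"

text \<open>F<X|dZ> as the subalgebra of F<X|Z> spanned by words in variables of degree in dZ;
  Phi_d : x_i^n \<mapsto> x_i^{dn} and Psi_d is the inclusion x_i^{dn} \<mapsto> x_i^{dn}.\<close>
definition FdZ :: "int \<Rightarrow> ('a::field) fpoly set" where
  "FdZ d = {f \<in> fa. \<forall>w. f w \<noteq> 0 \<longrightarrow> (\<forall>x\<in>set w. d dvd snd x)}"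

definition Phi :: "int \<Rightarrow> ('a::field) fpoly \<Rightarrow> 'a fpoly" where
  "Phi d f = (\<lambda>w. if (\<forall>x\<in>set w. d dvd snd x)
                  then f (map (\<lambda>(i, m). (i, m div d)) w) else 0)"

definition Psi :: "int \<Rightarrow> ('a::field) fpoly \<Rightarrow> 'a fpoly" where
  "Psi d f = f"

text \<open>Element of E: finitely supported coefficient function on finite subsets C of the
  index set (C ~ e_{c1} ... e_{ck}, c1 < ... < ck).\<close>
type_synonym 'a grass = "nat set \<Rightarrow> 'a"

definition gsign :: "nat set \<Rightarrow> nat set \<Rightarrow> 'a::field" where
  "gsign A B = (- 1) ^ card {(a, b). a \<in> A \<and> b \<in> B \<and> b < a}"

definition gmult :: "('a::field) grass \<Rightarrow> 'a grass \<Rightarrow> 'a grass" where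
  "gmult x y = (\<lambda>C. if finite C then (\<Sum>A\<in>Pow C. gsign A (C - A) * x A * y (C - A)) else 0)"

definition gone :: "('a::field) grass" where
  "gone = (\<lambda>C. if C = {} then 1 else 0)"

definition Ecarrier :: "('a::field) grass set" where
  "Ecarrier = {x. finite {C. x C \<noteq> 0} \<and> (\<forall>C. x C \<noteq> 0 \<longrightarrow> finite C)}"

definition Acomp :: "(nat \<Rightarrow> int) \<Rightarrow> int \<Rightarrow> ('a::field) grass set" where
  "Acomp deg g = {x \<in> Ecarrier. \<forall>C. x C \<noteq> 0 \<longrightarrow> (\<Sum>a\<in>C. deg a) = g}"

text \<open>Support {r. A_r \<noteq> 0}: the degrees of the basis monomials e_C.\<close>
definition gsupport :: "(nat \<Rightarrow> int) \<Rightarrow> int set" where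
  "gsupport deg = {(\<Sum>a\<in>C. deg a) | C. finite C}"

definition geval :: "(gvar \<Rightarrow> ('a::field) grass) \<Rightarrow> 'a fpoly \<Rightarrow> 'a grass" where
  "geval \<phi> f = (\<lambda>C. \<Sum>w\<in>{w. f w \<noteq> 0}. f w * foldr gmult (map \<phi> w) gone C)"

definition TZ_E :: "(nat \<Rightarrow> int) \<Rightarrow> ('a::field) fpoly set" where
  "TZ_E deg = {f \<in> fa. \<forall>\<phi>. (\<forall>i g. \<phi> (i, g) \<in> Acomp deg g) \<longrightarrow> geval \<phi> f = (\<lambda>C. 0)}"

definition int_subgroup :: "int set \<Rightarrow> bool" where
  "int_subgroup H \<longleftrightarrow> 0 \<in> H \<and> (\<forall>x\<in>H. \<forall>y\<in>H. x + y \<in> H) \<and> (\<forall>x\<in>H. - x \<in> H)"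

definition ecard :: "'b set \<Rightarrow> enat" where
  "ecard A = (if finite A then enat (card A) else \<infinity>)"

end

theory Submission
  imports Defs
begin

text \<open>Since d divides every r_j, the grading by r is the grading by r/d with all degrees
  multiplied by d. A graded substitution into E must send a variable whose degree is not in dZ
  to 0, so f is a graded identity for r exactly when its part in variables of degree in dZ,
  rescaled by the inverse of Phi_d (this is unscale d f), is a graded identity for r/d.
  The T_Z-ideal generated by Phi_d(S) and N is this set of polynomials: Phi_d commutes with
  graded substitutions up to a change of the substitution, so the polynomials whose image
  under Phi_d lies in it form a T_Z-ideal containing S, hence all graded identities for r/d;
  and N generates every polynomial supported on words containing a variable of degree
  outside dZ.\<close>

section \<open>Rescaling degrees of variables\<close>

definition scale_var :: "int \<Rightarrow> gvar \<Rightarrow> gvar" where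
  "scale_var d x = (fst x, d * snd x)"

definition unscale_var :: "int \<Rightarrow> gvar \<Rightarrow> gvar" where
  "unscale_var d x = (fst x, snd x div d)"

definition dvd_words :: "int \<Rightarrow> gvar list set" where
  "dvd_words d = {w. \<forall>x\<in>set w. d dvd snd x}"

definition unscale :: "int \<Rightarrow> ('a::field) fpoly \<Rightarrow> 'a fpoly" where
  "unscale d f = (\<lambda>w. f (map (scale_var d) w))"

lemma Phi_eq: "Phi d f w = (if w \<in> dvd_words d then f (map (unscale_var d) w) else 0)"
proof -
  have "(\<lambda>(i, m). (i, m div d)) = unscale_var d"
    by (auto simp: unscale_var_def fun_eq_iff)
  then show ?thesis
    by (simp add: Phi_def dvd_words_def)
qed

lemma inj_map_scale_var: "d \<noteq> 0 \<Longrightarrow> inj (map (scale_var d))"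
  by (auto simp: inj_def scale_var_def prod_eq_iff intro!: inj_mapI)

lemma unscale_scale_var [simp]: "d \<noteq> 0 \<Longrightarrow> map (unscale_var d) (map (scale_var d) w) = w"
  by (induct w) (auto simp: unscale_var_def scale_var_def)

lemma map_scale_var_in_dvd_words [simp]: "map (scale_var d) w \<in> dvd_words d"
  by (auto simp: dvd_words_def scale_var_def)

lemma scale_unscale_var:
  "w \<in> dvd_words d \<Longrightarrow> map (scale_var d) (map (unscale_var d) w) = w"
  by (induct w) (auto simp: dvd_words_def scale_var_def unscale_var_def prod_eq_iff)

lemma dvd_words_append [simp]: "u @ v \<in> dvd_words d \<longleftrightarrow> u \<in> dvd_words d \<and> v \<in> dvd_words d"
  by (auto simp: dvd_words_def)

lemma wdeg_map_scale_var: "wdeg (map (scale_var d) w) = d * wdeg w"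
  by (induct w) (auto simp: wdeg_def scale_var_def algebra_simps)

definition pmonom :: "'a::field \<Rightarrow> gvar list \<Rightarrow> 'a fpoly" where
  "pmonom c u = (\<lambda>w. if w = u then c else 0)"

lemma pvar_eq_pmonom: "pvar x = pmonom 1 [x]"
  by (simp add: pvar_def pmonom_def)

lemma pmult_pmonom: "pmult (pmonom a u) (pmonom b v) = pmonom (a * b) (u @ v)"
proof
  fix w
  have split: "(take k w = u \<and> drop k w = v) \<longleftrightarrow> (w = u @ v \<and> k = length u)"
    if "k \<le> length w" for k
  proof
    assume split_at_k: "take k w = u \<and> drop k w = v"
    then have "w = u @ v"
      by (metis append_take_drop_id)
    moreover have "k = length u"
      using split_at_k that by auto
    ultimately show "w = u @ v \<and> k = length u"
      by simp
  qed auto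
  have "pmonom a u (take k w) * pmonom b v (drop k w)
      = (if k = length u then pmonom (a * b) (u @ v) w else 0)" if "k \<le> length w" for k
  proof -
    have "pmonom a u (take k w) * pmonom b v (drop k w)
        = (if take k w = u \<and> drop k w = v then a * b else 0)"
      by (simp add: pmonom_def)
    then show ?thesis
      by (simp add: split[OF that] pmonom_def)
  qed
  then have "pmult (pmonom a u) (pmonom b v) w
      = (\<Sum>k\<le>length w. if k = length u then pmonom (a * b) (u @ v) w else 0)"
    unfolding pmult_def by (intro sum.cong) auto
  also have "\<dots> = pmonom (a * b) (u @ v) w"
    by (auto simp: pmonom_def)
  finally show "pmult (pmonom a u) (pmonom b v) w = pmonom (a * b) (u @ v) w" .
qed

lemma pmult_zero_left [simp]: "pmult (\<lambda>w. 0) g = (\<lambda>w. (0::'a::field))"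
  by (simp add: pmult_def)

lemma pmult_zero_right [simp]: "pmult f (\<lambda>w. 0) = (\<lambda>w. (0::'a::field))"
  by (simp add: pmult_def)

lemma foldr_pmult_eq_zero:
  "x \<in> set w \<Longrightarrow> \<sigma> x = (\<lambda>w. 0) \<Longrightarrow> foldr pmult (map \<sigma> w) pone = (\<lambda>w. (0::'a::field))"
  by (induct w) auto

lemma gmult_zero_left [simp]: "gmult (\<lambda>C. 0) g = (\<lambda>C. (0::'a::field))"
  by (simp add: gmult_def fun_eq_iff)

lemma gmult_zero_right [simp]: "gmult f (\<lambda>C. 0) = (\<lambda>C. (0::'a::field))"
  by (simp add: gmult_def fun_eq_iff)

lemma foldr_gmult_eq_zero:
  "x \<in> set w \<Longrightarrow> \<phi> x = (\<lambda>C. 0) \<Longrightarrow> foldr gmult (map \<phi> w) gone = (\<lambda>C. (0::'a::field))"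
  by (induct w) auto

lemma fa_zero: "(\<lambda>w. 0) \<in> fa"
  by (simp add: fa_def)

lemma fa_pone: "pone \<in> fa"
  by (simp add: fa_def pone_def)

lemma fa_pmonom: "pmonom c u \<in> fa"
proof -
  have "{w. pmonom c u w \<noteq> 0} \<subseteq> {u}"
    by (auto simp: pmonom_def)
  then show ?thesis
    by (auto simp: fa_def intro: finite_subset)
qed

lemma fa_padd:
  assumes "f \<in> fa" "g \<in> fa"
  shows "padd f g \<in> fa"
proof -
  have "{w. padd f g w \<noteq> 0} \<subseteq> {w. f w \<noteq> 0} \<union> {w. g w \<noteq> 0}"
    by (auto simp: padd_def)
  then show ?thesis
    using assms by (auto simp: fa_def intro: finite_subset)
qed

lemma fa_pmult:
  assumes "f \<in> fa" "g \<in> fa"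
  shows "pmult f g \<in> fa"
proof -
  have "{w. pmult f g w \<noteq> 0} \<subseteq> (\<lambda>(u, v). u @ v) ` ({w. f w \<noteq> 0} \<times> {w. g w \<noteq> 0})"
  proof
    fix w
    assume "w \<in> {w. pmult f g w \<noteq> 0}"
    then obtain k where "f (take k w) * g (drop k w) \<noteq> 0"
      unfolding pmult_def by (auto elim: sum.not_neutral_contains_not_neutral)
    then show "w \<in> (\<lambda>(u, v). u @ v) ` ({w. f w \<noteq> 0} \<times> {w. g w \<noteq> 0})"
      by (intro image_eqI[of _ _ "(take k w, drop k w)"]) auto
  qed
  then show ?thesis
    using assms by (auto simp: fa_def intro: finite_subset)
qed

lemma fa_foldr_pmult: "(\<And>x. \<sigma> x \<in> fa) \<Longrightarrow> foldr pmult (map \<sigma> w) pone \<in> fa"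
  by (induct w) (auto simp: fa_pone fa_pmult)

lemma fa_subst:
  assumes f: "f \<in> fa" and \<sigma>: "\<And>x. \<sigma> x \<in> fa"
  shows "subst \<sigma> f \<in> fa"
proof -
  have "{u. subst \<sigma> f u \<noteq> 0} \<subseteq> (\<Union>w\<in>{w. f w \<noteq> 0}. {u. foldr pmult (map \<sigma> w) pone u \<noteq> 0})"
  proof
    fix u
    assume "u \<in> {u. subst \<sigma> f u \<noteq> 0}"
    then obtain w where "w \<in> {w. f w \<noteq> 0}" "f w * foldr pmult (map \<sigma> w) pone u \<noteq> 0"
      unfolding subst_def by (auto elim: sum.not_neutral_contains_not_neutral)
    then show "u \<in> (\<Union>w\<in>{w. f w \<noteq> 0}. {u. foldr pmult (map \<sigma> w) pone u \<noteq> 0})"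
      by auto
  qed
  moreover have "finite (\<Union>w\<in>{w. f w \<noteq> 0}. {u. foldr pmult (map \<sigma> w) pone u \<noteq> 0})"
    using f fa_foldr_pmult[OF \<sigma>] by (auto simp: fa_def)
  ultimately show ?thesis
    by (auto simp: fa_def intro: finite_subset)
qed

lemma graded_endo_fa: "graded_endo \<sigma> \<Longrightarrow> \<sigma> x \<in> fa"
  by (cases x) (simp add: graded_endo_def)

section \<open>T_Z-ideals\<close>

lemma TZ_ideal_fa: "TZ_ideal fa"
  by (auto simp: TZ_ideal_def is_ideal_def fa_zero fa_padd fa_pmult graded_endo_fa
      intro: fa_subst)

lemma TZ_ideal_zero: "TZ_ideal I \<Longrightarrow> (\<lambda>w. 0) \<in> I"
  and TZ_ideal_padd: "TZ_ideal I \<Longrightarrow> f \<in> I \<Longrightarrow> g \<in> I \<Longrightarrow> padd f g \<in> I"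
  and TZ_ideal_pmult_left: "TZ_ideal I \<Longrightarrow> h \<in> fa \<Longrightarrow> f \<in> I \<Longrightarrow> pmult h f \<in> I"
  and TZ_ideal_pmult_right: "TZ_ideal I \<Longrightarrow> h \<in> fa \<Longrightarrow> f \<in> I \<Longrightarrow> pmult f h \<in> I"
  and TZ_ideal_subst: "TZ_ideal I \<Longrightarrow> graded_endo \<sigma> \<Longrightarrow> f \<in> I \<Longrightarrow> subst \<sigma> f \<in> I"
  by (auto simp: TZ_ideal_def is_ideal_def)

lemma Tgen_least: "TZ_ideal I \<Longrightarrow> X \<subseteq> I \<Longrightarrow> Tgen X \<subseteq> I"
  by (auto simp: Tgen_def)

lemma subset_Tgen: "X \<subseteq> Tgen X"
  by (auto simp: Tgen_def)

lemma TZ_ideal_Tgen: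
  assumes "X \<subseteq> fa"
  shows "TZ_ideal (Tgen X)"
proof -
  have "Tgen X \<subseteq> fa"
    using Tgen_least[OF TZ_ideal_fa assms] .
  then show ?thesis
    by (auto simp: TZ_ideal_def is_ideal_def Tgen_def)
qed

lemma TZ_ideal_pmonom:
  assumes I: "TZ_ideal I" and x: "pvar x \<in> I" "x \<in> set w"
  shows "pmonom c w \<in> I"
proof -
  obtain u v where w: "w = u @ x # v"
    using split_list[OF x(2)] by blast
  have "pmonom c w = pmult (pmult (pmonom c u) (pvar x)) (pmonom 1 v)"
    by (simp add: pvar_eq_pmonom pmult_pmonom w)
  then show ?thesis
    using x(1) by (simp add: TZ_ideal_pmult_left TZ_ideal_pmult_right I fa_pmonom)
qed

lemma TZ_ideal_if_monomials:
  assumes I: "TZ_ideal I" and f: "f \<in> fa"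
    and monomials: "\<And>w. f w \<noteq> 0 \<Longrightarrow> pmonom (f w) w \<in> I"
  shows "f \<in> I"
proof -
  have partial: "(\<lambda>u. if u \<in> G then f u else 0) \<in> I" if "finite G" "G \<subseteq> {w. f w \<noteq> 0}" for G
    using that
  proof (induction G rule: finite_induct)
    case empty
    then show ?case
      using TZ_ideal_zero[OF I] by simp
  next
    case (insert w G)
    have "(\<lambda>u. if u \<in> insert w G then f u else 0)
        = padd (pmonom (f w) w) (\<lambda>u. if u \<in> G then f u else 0)"
      using insert.hyps(2) by (auto simp: padd_def pmonom_def fun_eq_iff)
    moreover have "pmonom (f w) w \<in> I"
      using insert.prems by (intro monomials) auto
    moreover have "(\<lambda>u. if u \<in> G then f u else 0) \<in> I"
      using insert.prems by (intro insert.IH) auto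
    ultimately show ?case
      by (simp only: TZ_ideal_padd[OF I])
  qed
  have "f = (\<lambda>u. if u \<in> {w. f w \<noteq> 0} then f u else 0)"
    by (auto simp: fun_eq_iff)
  also have "\<dots> \<in> I"
    by (rule partial) (use f in \<open>simp_all add: fa_def\<close>)
  finally show ?thesis .
qed

lemma TZ_ideal_vimage:
  assumes I: "TZ_ideal I"
    and fa_L: "\<And>f. f \<in> fa \<Longrightarrow> L f \<in> fa"
    and L_zero: "L (\<lambda>w. 0) = (\<lambda>w. 0)"
    and L_padd: "\<And>f g. L (padd f g) = padd (L f) (L g)"
    and L_pmult: "\<And>f g. L (pmult f g) = pmult (L f) (L g)"
    and L_subst: "\<And>\<sigma> f. graded_endo \<sigma> \<Longrightarrow> f \<in> fa \<Longrightarrow>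
                    \<exists>\<tau>. graded_endo \<tau> \<and> L (subst \<sigma> f) = subst \<tau> (L f)"
  shows "TZ_ideal {f \<in> fa. L f \<in> I}"
  unfolding TZ_ideal_def is_ideal_def
proof (intro conjI ballI allI impI)
  show "{f \<in> fa. L f \<in> I} \<subseteq> fa" "(\<lambda>w. 0) \<in> {f \<in> fa. L f \<in> I}"
    by (auto simp: L_zero fa_zero TZ_ideal_zero[OF I])
  fix f
  assume f: "f \<in> {f \<in> fa. L f \<in> I}"
  show "padd f g \<in> {f \<in> fa. L f \<in> I}" if "g \<in> {f \<in> fa. L f \<in> I}" for g
    using f that by (simp add: L_padd fa_padd TZ_ideal_padd[OF I])
  show "pmult h f \<in> {f \<in> fa. L f \<in> I}" "pmult f h \<in> {f \<in> fa. L f \<in> I}" if "h \<in> fa" for h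
    using f that
    by (simp_all add: L_pmult fa_pmult fa_L TZ_ideal_pmult_left[OF I] TZ_ideal_pmult_right[OF I])
  show "subst \<sigma> f \<in> {f \<in> fa. L f \<in> I}" if \<sigma>: "graded_endo \<sigma>" for \<sigma>
  proof -
    obtain \<tau> where "graded_endo \<tau>" "L (subst \<sigma> f) = subst \<tau> (L f)"
      using L_subst[OF \<sigma>] f by blast
    then show ?thesis
      using f by (simp add: fa_subst graded_endo_fa[OF \<sigma>] TZ_ideal_subst[OF I])
  qed
qed

lemma unscale_Phi [simp]: "d \<noteq> 0 \<Longrightarrow> unscale d (Phi d g) = g"
  by (simp add: Phi_eq unscale_def fun_eq_iff del: map_map)

lemma Phi_unscale: "Phi d (unscale d f) w = (if w \<in> dvd_words d then f w else 0)"
  by (simp add: Phi_eq unscale_def scale_unscale_var del: map_map)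

lemma unscale_zero: "unscale d (\<lambda>w. 0) = (\<lambda>w. 0)"
  and unscale_padd: "unscale d (padd f g) = padd (unscale d f) (unscale d g)"
  and unscale_pmult: "unscale d (pmult f g) = pmult (unscale d f) (unscale d g)"
  and unscale_pone: "unscale d pone = pone"
  by (simp_all add: unscale_def padd_def pmult_def pone_def fun_eq_iff take_map drop_map)

lemma unscale_foldr_pmult:
  "unscale d (foldr pmult (map \<sigma> w) pone) = foldr pmult (map (unscale d \<circ> \<sigma>) w) pone"
  by (induct w) (simp_all add: unscale_pmult unscale_pone)

lemma Phi_zero: "Phi d (\<lambda>w. 0) = (\<lambda>w. 0)"
  and Phi_padd: "Phi d (padd f g) = padd (Phi d f) (Phi d g)"
  and Phi_pone: "Phi d pone = pone"
  by (auto simp: Phi_eq padd_def pone_def fun_eq_iff dvd_words_def)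

lemma Phi_pmult: "Phi d (pmult f g) = pmult (Phi d f) (Phi d g)"
proof
  fix w
  show "Phi d (pmult f g) w = pmult (Phi d f) (Phi d g) w"
  proof (cases "w \<in> dvd_words d")
    case True
    then have "take k w \<in> dvd_words d" "drop k w \<in> dvd_words d" for k
      using dvd_words_append[of "take k w" "drop k w" d] by simp_all
    with True show ?thesis
      by (simp add: Phi_eq pmult_def take_map drop_map)
  next
    case False
    then have factor_zero: "Phi d f (take k w) * Phi d g (drop k w) = 0" for k
      using dvd_words_append[of "take k w" "drop k w" d] by (auto simp: Phi_eq)
    have "pmult (Phi d f) (Phi d g) w = 0"
      unfolding pmult_def by (rule sum.neutral) (use factor_zero in blast)
    with False show ?thesis
      by (simp add: Phi_eq)
  qed
qed

lemma Phi_foldr_pmult: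
  "Phi d (foldr pmult (map \<sigma> w) pone) = foldr pmult (map (Phi d \<circ> \<sigma>) w) pone"
  by (induct w) (simp_all add: Phi_pmult Phi_pone)

lemma fa_unscale:
  assumes "d \<noteq> 0" "f \<in> fa"
  shows "unscale d f \<in> fa"
proof -
  have "{w. unscale d f w \<noteq> 0} = map (scale_var d) -` {w. f w \<noteq> 0}"
    by (auto simp: unscale_def)
  moreover have "finite (map (scale_var d) -` {w. f w \<noteq> 0})"
    by (rule finite_vimageI) (use assms inj_map_scale_var in \<open>auto simp: fa_def\<close>)
  ultimately show ?thesis
    by (simp add: fa_def)
qed

lemma fa_Phi:
  assumes "f \<in> fa"
  shows "Phi d f \<in> fa"
proof -
  have "{w. Phi d f w \<noteq> 0} \<subseteq> map (scale_var d) ` {w. f w \<noteq> 0}"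
  proof
    fix w
    assume "w \<in> {w. Phi d f w \<noteq> 0}"
    then have "w \<in> dvd_words d" "f (map (unscale_var d) w) \<noteq> 0"
      by (auto simp: Phi_eq split: if_splits)
    then show "w \<in> map (scale_var d) ` {w. f w \<noteq> 0}"
      using scale_unscale_var by (intro image_eqI[of _ _ "map (unscale_var d) w"]) auto
  qed
  then show ?thesis
    using assms by (auto simp: fa_def intro: finite_subset)
qed

lemma sum_support_unscale:
  fixes f :: "('a::field) fpoly"
  assumes d: "d \<noteq> 0" and fin: "finite {w. f w \<noteq> 0}"
    and vanish: "\<And>w. w \<notin> dvd_words d \<Longrightarrow> P w = 0"
  shows "(\<Sum>w\<in>{w. f w \<noteq> 0}. f w * P w)
       = (\<Sum>w\<in>{w. unscale d f w \<noteq> 0}. unscale d f w * P (map (scale_var d) w))"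
proof -
  have image: "map (scale_var d) ` {w. unscale d f w \<noteq> 0} = {w. f w \<noteq> 0} \<inter> dvd_words d"
  proof (intro equalityI subsetI)
    fix w
    assume "w \<in> {w. f w \<noteq> 0} \<inter> dvd_words d"
    then show "w \<in> map (scale_var d) ` {w. unscale d f w \<noteq> 0}"
      using scale_unscale_var
      by (intro image_eqI[of _ _ "map (unscale_var d) w"]) (auto simp: unscale_def)
  qed (auto simp: unscale_def)
  have "(\<Sum>w\<in>{w. f w \<noteq> 0}. f w * P w) = (\<Sum>w\<in>{w. f w \<noteq> 0} \<inter> dvd_words d. f w * P w)"
    by (rule sum.mono_neutral_right) (use fin vanish in auto)
  also have "\<dots> = (\<Sum>w\<in>{w. unscale d f w \<noteq> 0}. unscale d f w * P (map (scale_var d) w))"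
    unfolding image[symmetric] using inj_map_scale_var[OF d]
    by (subst sum.reindex) (auto simp: unscale_def intro: inj_on_subset)
  finally show ?thesis .
qed

lemma graded_endo_unscale:
  assumes d: "d \<noteq> 0" and \<sigma>: "graded_endo \<sigma>"
  shows "graded_endo (unscale d \<circ> \<sigma> \<circ> scale_var d)"
  unfolding graded_endo_def
proof (intro allI conjI)
  fix i m
  have "\<sigma> (i, d * m) \<in> fa" and homog: "homog (d * m) (\<sigma> (i, d * m))"
    using \<sigma> by (auto simp: graded_endo_def)
  then show "(unscale d \<circ> \<sigma> \<circ> scale_var d) (i, m) \<in> fa"
    using fa_unscale[OF d] by (simp add: scale_var_def)
  show "homog m ((unscale d \<circ> \<sigma> \<circ> scale_var d) (i, m))"
    unfolding homog_def
  proof (intro allI impI)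
    fix w
    assume "(unscale d \<circ> \<sigma> \<circ> scale_var d) (i, m) w \<noteq> 0"
    then have "wdeg (map (scale_var d) w) = d * m"
      using homog by (simp add: homog_def unscale_def scale_var_def)
    then show "wdeg w = m"
      using d by (simp add: wdeg_map_scale_var)
  qed
qed

lemma unscale_graded_endo_eq_zero:
  assumes \<sigma>: "graded_endo \<sigma>" and x: "\<not> d dvd snd x"
  shows "unscale d (\<sigma> x) = (\<lambda>w. 0)"
proof
  fix w
  obtain i m where x_eq: "x = (i, m)"
    by (cases x)
  have "homog m (\<sigma> (i, m))"
    using \<sigma> by (simp add: graded_endo_def)
  then show "unscale d (\<sigma> x) w = 0"
    using x x_eq by (auto simp: homog_def unscale_def wdeg_map_scale_var)
qed

lemma unscale_subst:
  assumes d: "d \<noteq> 0" and f: "f \<in> fa" and \<sigma>: "graded_endo \<sigma>"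
  shows "unscale d (subst \<sigma> f) = subst (unscale d \<circ> \<sigma> \<circ> scale_var d) (unscale d f)"
proof
  fix u
  have vanish: "foldr pmult (map (unscale d \<circ> \<sigma>) w) pone u = 0" if w: "w \<notin> dvd_words d" for w
  proof -
    obtain x where "x \<in> set w" "\<not> d dvd snd x"
      using w unfolding dvd_words_def by blast
    then show ?thesis
      using foldr_pmult_eq_zero[of x w "unscale d \<circ> \<sigma>"] unscale_graded_endo_eq_zero[OF \<sigma>]
      by simp
  qed
  have "unscale d (subst \<sigma> f) u
      = (\<Sum>w\<in>{w. f w \<noteq> 0}. f w * foldr pmult (map (unscale d \<circ> \<sigma>) w) pone u)"
    using unscale_foldr_pmult[of d \<sigma>] by (simp add: subst_def unscale_def fun_eq_iff)
  also have "\<dots> = subst (unscale d \<circ> \<sigma> \<circ> scale_var d) (unscale d f) u"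
    using f by (simp add: sum_support_unscale[OF d] vanish fa_def subst_def)
  finally show "unscale d (subst \<sigma> f) u = subst (unscale d \<circ> \<sigma> \<circ> scale_var d) (unscale d f) u" .
qed

definition Phi_endo :: "int \<Rightarrow> (gvar \<Rightarrow> ('a::field) fpoly) \<Rightarrow> gvar \<Rightarrow> 'a fpoly" where
  "Phi_endo d \<sigma> x = (if d dvd snd x then Phi d (\<sigma> (unscale_var d x)) else (\<lambda>w. 0))"

lemma graded_endo_Phi_endo:
  assumes d: "d \<noteq> 0" and \<sigma>: "graded_endo \<sigma>"
  shows "graded_endo (Phi_endo d \<sigma>)"
  unfolding graded_endo_def
proof (intro allI conjI)
  fix i m
  show "Phi_endo d \<sigma> (i, m) \<in> fa"
    using graded_endo_fa[OF \<sigma>] by (simp add: Phi_endo_def fa_zero fa_Phi)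
  show "homog m (Phi_endo d \<sigma> (i, m))"
  proof (cases "d dvd m")
    case True
    have "homog (m div d) (\<sigma> (i, m div d))"
      using \<sigma> by (simp add: graded_endo_def)
    show ?thesis
      unfolding homog_def
    proof (intro allI impI)
      fix w
      assume "Phi_endo d \<sigma> (i, m) w \<noteq> 0"
      then have w: "w \<in> dvd_words d" "\<sigma> (i, m div d) (map (unscale_var d) w) \<noteq> 0"
        using True by (auto simp: Phi_endo_def Phi_eq unscale_var_def split: if_splits)
      then have "wdeg (map (unscale_var d) w) = m div d"
        using \<open>homog (m div d) (\<sigma> (i, m div d))\<close> by (simp add: homog_def)
      then show "wdeg w = m"
        using wdeg_map_scale_var[of d "map (unscale_var d) w"] scale_unscale_var[OF w(1)] True
        by simp
    qed
  next
    case False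
    then show ?thesis
      by (simp add: Phi_endo_def homog_def)
  qed
qed

lemma Phi_subst:
  assumes d: "d \<noteq> 0" and g: "g \<in> fa"
  shows "Phi d (subst \<sigma> g) = subst (Phi_endo d \<sigma>) (Phi d g)"
proof
  fix u
  have "subst (Phi_endo d \<sigma>) (Phi d g) u
      = (\<Sum>w\<in>{w. Phi d g w \<noteq> 0}. Phi d g w * foldr pmult (map (Phi_endo d \<sigma>) w) pone u)"
    by (simp add: subst_def)
  also have "\<dots> = (\<Sum>w\<in>{w. g w \<noteq> 0}. g w * foldr pmult (map (Phi d \<circ> \<sigma>) w) pone u)"
  proof -
    have "Phi_endo d \<sigma> \<circ> scale_var d = Phi d \<circ> \<sigma>"
      using d by (simp add: Phi_endo_def scale_var_def unscale_var_def fun_eq_iff)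
    moreover have "foldr pmult (map (Phi_endo d \<sigma>) w) pone u = 0" if "w \<notin> dvd_words d" for w
      using that foldr_pmult_eq_zero[of _ w "Phi_endo d \<sigma>"]
      unfolding dvd_words_def Phi_endo_def by auto
    ultimately show ?thesis
      using fa_Phi[OF g] d by (simp add: sum_support_unscale fa_def)
  qed
  also have "\<dots> = (\<Sum>w\<in>{w. g w \<noteq> 0}. g w * Phi d (foldr pmult (map \<sigma> w) pone) u)"
    by (simp only: Phi_foldr_pmult)
  also have "\<dots> = Phi d (subst \<sigma> g) u"
    by (cases "u \<in> dvd_words d") (simp_all add: Phi_eq subst_def)
  finally show "Phi d (subst \<sigma> g) u = subst (Phi_endo d \<sigma>) (Phi d g) u" ..
qed

lemma TZ_ideal_vimage_unscale:
  "d \<noteq> 0 \<Longrightarrow> TZ_ideal I \<Longrightarrow> TZ_ideal {f \<in> fa. unscale d f \<in> I}"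
  by (rule TZ_ideal_vimage)
    (auto simp: fa_unscale unscale_zero unscale_padd unscale_pmult
      intro: unscale_subst graded_endo_unscale)

lemma TZ_ideal_vimage_Phi:
  "d \<noteq> 0 \<Longrightarrow> TZ_ideal I \<Longrightarrow> TZ_ideal {f \<in> fa. Phi d f \<in> I}"
  by (rule TZ_ideal_vimage)
    (auto simp: fa_Phi Phi_zero Phi_padd Phi_pmult intro: Phi_subst graded_endo_Phi_endo)

section \<open>Graded identities of the rescaled grading\<close>

lemma geval_unscale:
  assumes d: "d \<noteq> 0" and f: "f \<in> fa" and vanish: "\<And>x. \<not> d dvd snd x \<Longrightarrow> \<phi> x = (\<lambda>C. 0)"
  shows "geval \<phi> f = geval (\<phi> \<circ> scale_var d) (unscale d f)"
proof
  fix C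
  have "foldr gmult (map \<phi> w) gone C = 0" if w: "w \<notin> dvd_words d" for w
  proof -
    obtain x where "x \<in> set w" "\<not> d dvd snd x"
      using w unfolding dvd_words_def by blast
    then show ?thesis
      using foldr_gmult_eq_zero[of x w \<phi>] vanish by simp
  qed
  then show "geval \<phi> f C = geval (\<phi> \<circ> scale_var d) (unscale d f) C"
    using f by (simp add: geval_def sum_support_unscale[OF d] fa_def)
qed

lemma Acomp_scale:
  "d \<noteq> 0 \<Longrightarrow> Acomp (\<lambda>i. d * deg i) (d * m) = Acomp deg m"
  by (simp add: Acomp_def sum_distrib_left[symmetric])

lemma Acomp_scale_eq_zero:
  assumes "x \<in> Acomp (\<lambda>i. d * deg i) m" "\<not> d dvd m"
  shows "x = (\<lambda>C. 0)"
proof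
  fix C
  show "x C = 0"
  proof (rule ccontr)
    assume "x C \<noteq> 0"
    then have "(\<Sum>a\<in>C. d * deg a) = m"
      using assms(1) by (simp add: Acomp_def)
    then show False
      using assms(2) by (metis dvd_triv_left sum_distrib_left)
  qed
qed

lemma zero_in_Acomp: "(\<lambda>C. 0) \<in> Acomp deg m"
  by (simp add: Acomp_def Ecarrier_def)

lemma TZ_E_subset_fa: "TZ_E deg \<subseteq> fa"
  by (auto simp: TZ_E_def)

lemma unscale_in_TZ_E:
  fixes f :: "('a::field) fpoly"
  assumes d: "d \<noteq> 0" and f: "f \<in> TZ_E (\<lambda>i. d * deg i)"
  shows "unscale d f \<in> TZ_E deg"
proof -
  have f_fa: "f \<in> fa"
    using f TZ_E_subset_fa by blast
  have "geval \<psi> (unscale d f) = (\<lambda>C. 0)" if \<psi>: "\<forall>i g. \<psi> (i, g) \<in> Acomp deg g" for \<psi>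
  proof -
    define \<phi> where "\<phi> x = (if d dvd snd x then \<psi> (unscale_var d x) else (\<lambda>C. 0))" for x
    have \<phi>_graded: "\<forall>i g. \<phi> (i, g) \<in> Acomp (\<lambda>i. d * deg i) g"
    proof (intro allI)
      fix i g
      show "\<phi> (i, g) \<in> Acomp (\<lambda>i. d * deg i) g"
      proof (cases "d dvd g")
        case True
        then obtain k where g: "g = d * k"
          by blast
        have "\<psi> (i, k) \<in> Acomp deg k"
          by (rule \<psi>[rule_format])
        then show ?thesis
          using d g by (simp add: \<phi>_def unscale_var_def Acomp_scale)
      next
        case False
        then show ?thesis
          by (simp add: \<phi>_def zero_in_Acomp)
      qed
    qed
    have vanish: "\<phi> x = (\<lambda>C. 0)" if "\<not> d dvd snd x" for x
      using that by (simp add: \<phi>_def)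
    have "\<phi> \<circ> scale_var d = \<psi>"
      using d by (simp add: \<phi>_def scale_var_def unscale_var_def fun_eq_iff)
    then have "geval \<psi> (unscale d f) = geval \<phi> f"
      using geval_unscale[OF d f_fa vanish] by simp
    also have "\<dots> = (\<lambda>C. 0)"
      using f \<phi>_graded by (simp add: TZ_E_def)
    finally show ?thesis .
  qed
  then show ?thesis
    using fa_unscale[OF d f_fa] by (simp add: TZ_E_def)
qed

lemma in_TZ_E_scale_if_unscale:
  fixes f :: "('a::field) fpoly"
  assumes d: "d \<noteq> 0" and f_fa: "f \<in> fa" and f: "unscale d f \<in> TZ_E deg"
  shows "f \<in> TZ_E (\<lambda>i. d * deg i)"
proof -
  have "geval \<phi> f = (\<lambda>C. 0)" if \<phi>: "\<forall>i g. \<phi> (i, g) \<in> Acomp (\<lambda>i. d * deg i) g" for \<phi>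
  proof -
    have vanish: "\<phi> x = (\<lambda>C. 0)" if x: "\<not> d dvd snd x" for x
    proof -
      obtain i m where "x = (i, m)"
        by (cases x)
      then show ?thesis
        using Acomp_scale_eq_zero[OF \<phi>[rule_format, of i m]] x by simp
    qed
    have "\<forall>i g. (\<phi> \<circ> scale_var d) (i, g) \<in> Acomp deg g"
    proof (intro allI)
      fix i g
      have "\<phi> (i, d * g) \<in> Acomp (\<lambda>i. d * deg i) (d * g)"
        by (rule \<phi>[rule_format])
      then show "(\<phi> \<circ> scale_var d) (i, g) \<in> Acomp deg g"
        by (simp add: scale_var_def Acomp_scale[OF d])
    qed
    then have "geval (\<phi> \<circ> scale_var d) (unscale d f) = (\<lambda>C. 0)"
      using f by (simp add: TZ_E_def)
    then show ?thesis
      using geval_unscale[OF d f_fa vanish] by simp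
  qed
  then show ?thesis
    using f_fa by (simp add: TZ_E_def)
qed

lemma TZ_E_scale:
  assumes "d \<noteq> 0"
  shows "TZ_E (\<lambda>i. d * deg i) = {f \<in> fa. unscale d f \<in> (TZ_E deg :: ('a::field) fpoly set)}"
  using assms TZ_E_subset_fa unscale_in_TZ_E in_TZ_E_scale_if_unscale by blast

lemma TZ_ideal_if_Phi_unscale:
  assumes I: "TZ_ideal I" and vars: "\<And>x. \<not> d dvd snd x \<Longrightarrow> pvar x \<in> I"
    and f: "f \<in> fa" and Phi_unscale_f: "Phi d (unscale d f) \<in> I"
  shows "f \<in> I"
proof -
  define rest where "rest u = (if u \<in> dvd_words d then 0 else f u)" for u
  have "rest \<in> I"
  proof (rule TZ_ideal_if_monomials[OF I])
    show "rest \<in> fa"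
      using f by (auto simp: fa_def rest_def intro: finite_subset)
    fix w
    assume "rest w \<noteq> 0"
    then have "w \<notin> dvd_words d"
      by (simp add: rest_def split: if_splits)
    then obtain x where x: "x \<in> set w" "\<not> d dvd snd x"
      unfolding dvd_words_def by blast
    show "pmonom (rest w) w \<in> I"
      using vars[OF x(2)] x(1) by (rule TZ_ideal_pmonom[OF I])
  qed
  then have "padd (Phi d (unscale d f)) rest \<in> I"
    using Phi_unscale_f by (intro TZ_ideal_padd[OF I])
  moreover have "padd (Phi d (unscale d f)) rest = f"
    by (simp add: padd_def Phi_unscale rest_def fun_eq_iff)
  ultimately show ?thesis
    by simp
qed

lemma Tgen_Phi_image:
  fixes S :: "('a::field) fpoly set"
  assumes d: "d \<noteq> 0" and S_fa: "S \<subseteq> fa"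
  shows "Tgen (Phi d ` S \<union> {pvar (i, m) | i m. \<not> d dvd m}) = {f \<in> fa. unscale d f \<in> Tgen S}"
    (is "Tgen ?G = ?J")
proof
  have T: "TZ_ideal (Tgen S)"
    using TZ_ideal_Tgen[OF S_fa] .
  have "pvar (i, m) \<in> ?J" if "\<not> d dvd m" for i m
  proof -
    have "unscale d (pvar (i, m)) = (\<lambda>w. 0 :: 'a)"
      using that by (auto simp: unscale_def pvar_def scale_var_def fun_eq_iff)
    moreover have "pvar (i, m) \<in> fa"
      by (simp add: pvar_eq_pmonom fa_pmonom)
    ultimately show ?thesis
      using TZ_ideal_zero[OF T] by simp
  qed
  then have "?G \<subseteq> ?J"
    using S_fa subset_Tgen[of S] d by (auto simp: fa_Phi)
  then show "Tgen ?G \<subseteq> ?J"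
    by (rule Tgen_least[OF TZ_ideal_vimage_unscale[OF d T]])
next
  have G_fa: "?G \<subseteq> fa"
    using S_fa by (auto simp: fa_Phi pvar_eq_pmonom fa_pmonom)
  note K = TZ_ideal_Tgen[OF G_fa]
  have "S \<subseteq> {f \<in> fa. Phi d f \<in> Tgen ?G}"
    using S_fa subset_Tgen[of ?G] by auto
  then have T_K: "Tgen S \<subseteq> {f \<in> fa. Phi d f \<in> Tgen ?G}"
    by (rule Tgen_least[OF TZ_ideal_vimage_Phi[OF d K]])
  have vars: "pvar x \<in> Tgen ?G" if "\<not> d dvd snd x" for x
  proof -
    obtain i m where "x = (i, m)"
      by (cases x)
    then have "pvar x \<in> ?G"
      using that by auto
    then show ?thesis
      by (rule subsetD[OF subset_Tgen])
  qed
  show "?J \<subseteq> Tgen ?G"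
    using T_K by (auto intro: TZ_ideal_if_Phi_unscale[OF K vars])
qed

theorem theorem5p5:
  fixes n :: nat and r :: "nat \<Rightarrow> int" and v :: "nat \<Rightarrow> enat"
    and part :: "nat \<Rightarrow> nat" and d :: int
    and S :: "('a::field_char_0) fpoly set"
  assumes distinct: "inj_on r {..<n}"
    and part_range: "\<forall>i. part i < n"
    and part_card: "\<forall>j<n. ecard {i. part i = j} = v j"
    and subgrp: "int_subgroup (gsupport (\<lambda>i. r (part i)))"
    and d_def: "d = Gcd (r ` {..<n})"
    and d_nz: "d \<noteq> 0"
    and basis: "Tgen S = TZ_E (\<lambda>i. r (part i) div d)"
  shows "Tgen ((\<lambda>f. Psi d (Phi d f)) ` S \<union> {pvar (i, m) | i m. \<not> d dvd m})
           = TZ_E (\<lambda>i. r (part i))"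
proof -
  have "d dvd r (part i)" for i
    unfolding d_def using part_range by (intro Gcd_dvd) auto
  then have deg: "(\<lambda>i. r (part i)) = (\<lambda>i. d * (r (part i) div d))"
    by (simp add: fun_eq_iff)
  have S_fa: "S \<subseteq> fa"
    using subset_Tgen[of S] TZ_E_subset_fa by (auto simp: basis)
  have "Tgen ((\<lambda>f. Psi d (Phi d f)) ` S \<union> {pvar (i, m) | i m. \<not> d dvd m})
      = {f \<in> fa. unscale d f \<in> Tgen S}"
    unfolding Psi_def by (rule Tgen_Phi_image[OF d_nz S_fa])
  also have "\<dots> = TZ_E (\<lambda>i. r (part i))"
    unfolding basis deg by (rule TZ_E_scale[OF d_nz, symmetric])
  finally show ?thesis .
qed

end
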